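(* Let $G$ be a locally compact abelian group with compact identity component. Then the Braconnier modular function $\mathrm{mod}_G$ takes values in $\mathbb Q$.
   Context: The Braconnier modular function $\mathrm{mod}_G:\mathrm{Aut}(G)\to(0,\infty)$ is defined by $\mu(\alpha(S))=\mathrm{mod}_G(\alpha)\mu(S)$ for a Haar measure $\mu$ on $G$, all $\alpha\in\mathrm{Aut}(G)$ (bicontinuous automorphisms) and Borel sets $S$. *)

theory Defs
  imports "HOL-Analysis.Analysis"
begin

definition haar_measure :: "'a::{topological_ab_group_add,t2_space} measure \<Rightarrow> bool" where
  "haar_measure \<mu> \<longleftrightarrow>
     sets \<mu> = sets borel \<and>
     emeasure \<mu> (space \<mu>) \<noteq> 0 \<and>
     (\<forall>g. \<forall>A\<in>sets borel. emeasure \<mu> ((\<lambda>x. g + x) ` A) = emeasure \<mu> A) \<and>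
     (\<forall>K. compact K \<longrightarrow> emeasure \<mu> K < \<infinity>) \<and>
     (\<forall>A\<in>sets borel. emeasure \<mu> A = (INF U\<in>{U. open U \<and> A \<subseteq> U}. emeasure \<mu> U)) \<and>
     (\<forall>U. open U \<longrightarrow> emeasure \<mu> U = (SUP K\<in>{K. compact K \<and> K \<subseteq> U}. emeasure \<mu> K))"

definition top_group_aut :: "('a::topological_ab_group_add \<Rightarrow> 'a) \<Rightarrow> bool" where
  "top_group_aut \<alpha> \<longleftrightarrow>
     (\<forall>x y. \<alpha> (x + y) = \<alpha> x + \<alpha> y) \<and> (\<exists>\<beta>. homeomorphism UNIV UNIV \<alpha> \<beta>)"

definition braconnier_mod :: "'a::{topological_ab_group_add,t2_space} measure \<Rightarrow> ('a \<Rightarrow> 'a) \<Rightarrow> real" where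
  "braconnier_mod \<mu> \<alpha> =
     (THE c. c > 0 \<and> (\<forall>S\<in>sets borel. emeasure \<mu> (\<alpha> ` S) = ennreal c * emeasure \<mu> S))"

end

theory Submission
  imports Defs
begin

text \<open>If the identity component is compact, Wilder's theorem yields a compact open neighbourhood
  \<open>V\<close> of \<open>0\<close>, and the stabiliser of \<open>V\<close> under translation is a compact open subgroup \<open>U\<close>.
  Normalised on \<open>U\<close>, Haar measure is unique; comparing \<open>\<mu>\<close> with its pullback \<open>\<mu> \<circ> \<alpha>\<close> gives
  \<open>mod(\<alpha>) = \<mu>(\<alpha> U) / \<mu>(U)\<close>. Finally \<open>U\<close> and \<open>\<alpha> U\<close> are finite disjoint unions of cosets of
  the open subgroup \<open>U \<inter> \<alpha> U\<close>, so both measures are integer multiples of \<open>\<mu>(U \<inter> \<alpha> U)\<close>.\<close>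

lemma homeomorphism_UNIV_open_image:
  "homeomorphism UNIV UNIV f g \<Longrightarrow> open A \<Longrightarrow> open (f ` A)"
  using homeomorphism_imp_open_map[of UNIV UNIV f g A] by simp

lemma homeomorphism_UNIV_compact_image:
  "homeomorphism UNIV UNIV f g \<Longrightarrow> compact A \<Longrightarrow> compact (f ` A)"
  by (meson compact_continuous_image continuous_on_subset homeomorphism_def top_greatest)

lemma homeomorphism_UNIV_image_eq_vimage:
  assumes "homeomorphism UNIV UNIV f g"
  shows "f ` A = g -` A"
  using homeomorphism_apply1[OF assms] homeomorphism_apply2[OF assms]
  by (auto intro: image_eqI[of _ f, OF homeomorphism_apply2[OF assms, symmetric]])

lemma homeomorphism_UNIV_borel_image:
  assumes hom: "homeomorphism UNIV UNIV f g" and A: "A \<in> sets borel"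
  shows "f ` A \<in> sets borel"
proof -
  have "g \<in> borel_measurable borel"
    using hom unfolding homeomorphism_def by (intro borel_measurable_continuous_onI) auto
  then show ?thesis
    using A measurable_sets[of g borel borel A] homeomorphism_UNIV_image_eq_vimage[OF hom] by simp
qed

lemma homeomorphism_add_left:
  "homeomorphism UNIV UNIV ((+) (a::'a::topological_group_add)) ((+) (- a))"
  unfolding homeomorphism_def
  by (auto simp: add.assoc[symmetric] intro!: continuous_intros image_eqI[where x="- a + x" for x])

lemma open_add_left_image: "open A \<Longrightarrow> open ((+) (a::'a::topological_group_add) ` A)"
  by (rule homeomorphism_UNIV_open_image[OF homeomorphism_add_left])

lemma compact_add_left_image: "compact A \<Longrightarrow> compact ((+) (a::'a::topological_group_add) ` A)"
  by (rule homeomorphism_UNIV_compact_image[OF homeomorphism_add_left])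

lemma borel_add_left_image:
  "A \<in> sets borel \<Longrightarrow> (+) (a::'a::topological_group_add) ` A \<in> sets borel"
  by (rule homeomorphism_UNIV_borel_image[OF homeomorphism_add_left])

text \<open>Wilder's theorem separates the compact component of \<open>x\<close> from the complement of a
  compact neighbourhood by a clopen set.\<close>
lemma compact_component_imp_compact_open_nhd:
  fixes x :: "'a::t2_space"
  assumes lc: "locally_compact_space (euclidean :: 'a topology)"
    and compact_component: "compact (connected_component_set UNIV x)"
  obtains V where "compact V" "open V" "x \<in> V"
proof -
  let ?C = "connected_component_set UNIV x"
  have hausdorff: "Hausdorff_space (euclidean :: 'a topology)"
    unfolding Hausdorff_space_def by (metis disjnt_def hausdorff open_openin)
  obtain U L where UL: "open U" "compact L" "?C \<subseteq> U" "U \<subseteq> L"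
    using lc compact_component hausdorff locally_compact_space_compact_closed_compact
    by (metis compactin_euclidean_iff open_openin)
  have "connected_component_of_set euclidean x = ?C"
    unfolding connected_component_of_def connected_component_def by auto
  then have "?C \<in> connected_components_of euclidean"
    by (metis connected_component_in_connected_components_of UNIV_I topspace_euclidean)
  then obtain A B where AB: "openin euclidean A" "openin euclidean B" "disjnt A B"
      "A \<union> B = topspace euclidean" "?C \<subseteq> A" "A \<subseteq> U"
    using wilder_locally_compact_component_thm[OF lc hausdorff, of ?C U] compact_component UL
    by (metis compactin_euclidean_iff open_openin)
  have "A = - B" using AB(3,4) by (auto simp: disjnt_def)
  then have "closed A" using AB(2) by (simp add: open_openin[symmetric] closed_Compl)
  then have "compact A" using UL AB(6) by (metis compact_Int_closed inf.absorb_iff2 order_trans)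
  moreover have "x \<in> A" using AB(5) by auto
  ultimately show ?thesis using that AB(1) open_openin by blast
qed

lemma compact_add_symmetric_nhd_subset_open:
  fixes K :: "'a::topological_group_add set"
  assumes cK: "compact K" and oV: "open V" and KV: "K \<subseteq> V"
  obtains N where "open N" "0 \<in> N" "\<And>n. n \<in> N \<Longrightarrow> - n \<in> N"
    "\<And>x n. x \<in> K \<Longrightarrow> n \<in> N \<Longrightarrow> x + n \<in> V"
proof -
  have "open ((\<lambda>p. snd p + fst p) -` V)"
    using oV by (rule open_vimage) (intro continuous_intros)
  moreover have "{0} \<times> K \<subseteq> (\<lambda>p. snd p + fst p) -` V" using KV by auto
  ultimately have "\<exists>N0. 0 \<in> N0 \<and> open N0 \<and> N0 \<times> K \<subseteq> (\<lambda>p. snd p + fst p) -` V"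
    by (rule Elementary_Topology.tube_lemma[OF cK])
  then obtain N0 where N0: "0 \<in> N0" "open N0" "N0 \<times> K \<subseteq> (\<lambda>p. snd p + fst p) -` V"
    by blast
  have "open (uminus -` N0)"
    using N0(2) by (rule open_vimage) (intro continuous_intros)
  moreover have "x + n \<in> V" if "x \<in> K" "n \<in> N0" for x n
    using N0(3) that by auto
  ultimately show ?thesis
    using N0(1,2) by (intro that[of "N0 \<inter> uminus -` N0"]) auto
qed

definition add_subgroup :: "'a::group_add set \<Rightarrow> bool" where
  "add_subgroup H \<longleftrightarrow> 0 \<in> H \<and> (\<forall>x\<in>H. \<forall>y\<in>H. x + y \<in> H) \<and> (\<forall>x\<in>H. - x \<in> H)"

lemma add_subgroupI:
  "0 \<in> H \<Longrightarrow> (\<And>x y. x \<in> H \<Longrightarrow> y \<in> H \<Longrightarrow> x + y \<in> H) \<Longrightarrow> (\<And>x. x \<in> H \<Longrightarrow> - x \<in> H)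
    \<Longrightarrow> add_subgroup H"
  by (simp add: add_subgroup_def)

lemma add_subgroup_Int: "add_subgroup H \<Longrightarrow> add_subgroup K \<Longrightarrow> add_subgroup (H \<inter> K)"
  by (simp add: add_subgroup_def)

lemma add_subgroup_additive_image:
  fixes f :: "'a::ab_group_add \<Rightarrow> 'b::ab_group_add"
  assumes "add_subgroup H" and additive: "\<And>x y. f (x + y) = f x + f y"
  shows "add_subgroup (f ` H)"
proof -
  interpret additive f by unfold_locales (rule additive)
  show ?thesis
  proof (rule add_subgroupI)
    show "0 \<in> f ` H" using image_eqI[of 0 f 0 H] zero assms(1) by (simp add: add_subgroup_def)
    show "x + y \<in> f ` H" if "x \<in> f ` H" "y \<in> f ` H" for x y
      using that assms(1) by (auto simp: add_subgroup_def simp flip: add)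
    show "- x \<in> f ` H" if "x \<in> f ` H" for x
      using that assms(1) by (auto simp: add_subgroup_def simp flip: minus)
  qed
qed

lemma add_subgroup_add_left_image:
  assumes "add_subgroup H" "h \<in> H"
  shows "(+) h ` H = H"
proof
  show "(+) h ` H \<subseteq> H" using assms by (auto simp: add_subgroup_def)
  show "H \<subseteq> (+) h ` H"
  proof
    fix y assume "y \<in> H"
    then have "- h + y \<in> H" using assms unfolding add_subgroup_def by blast
    then show "y \<in> (+) h ` H" by (intro image_eqI[of _ _ "- h + y"]) (auto simp: add.assoc[symmetric])
  qed
qed

lemma add_coset_eq:
  assumes "add_subgroup H" "x \<in> (+) g ` H"
  shows "(+) x ` H = (+) g ` H"
proof -
  obtain h where h: "h \<in> H" "x = g + h" using assms(2) by auto
  have "(+) x ` H = (+) g ` ((+) h ` H)" using h by (auto simp: image_image add.assoc)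
  then show ?thesis using add_subgroup_add_left_image[OF assms(1) h(1)] by simp
qed

lemma add_coset_self: "add_subgroup H \<Longrightarrow> g \<in> (+) g ` H"
  by (intro image_eqI[of _ _ 0]) (auto simp: add_subgroup_def)

lemma add_cosets_disjoint:
  assumes "add_subgroup H"
  shows "disjoint_family_on id ((\<lambda>g. (+) g ` H) ` A)"
  unfolding disjoint_family_on_def
proof (intro ballI impI)
  fix C D assume "C \<in> (\<lambda>g. (+) g ` H) ` A" "D \<in> (\<lambda>g. (+) g ` H) ` A" "C \<noteq> D"
  then obtain a b where C: "C = (+) a ` H" and D: "D = (+) b ` H" by blast
  have "C = D" if "z \<in> C" "z \<in> D" for z
    using add_coset_eq[OF assms, of z a] add_coset_eq[OF assms, of z b] that C D by simp
  with \<open>C \<noteq> D\<close> show "id C \<inter> id D = {}" by auto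
qed

lemma add_subgroup_Union_cosets:
  assumes "add_subgroup H" "add_subgroup L" "H \<subseteq> L"
  shows "\<Union> ((\<lambda>g. (+) g ` H) ` L) = L"
  using assms add_coset_self[OF assms(1)] by (auto simp: add_subgroup_def)

lemma finite_cosets_open_add_subgroup:
  fixes H :: "'a::topological_group_add set"
  assumes "add_subgroup H" "open H" "compact K"
  shows "finite ((\<lambda>g. (+) g ` H) ` K)"
proof -
  have "K \<subseteq> (\<Union>g\<in>K. (+) g ` H)" using add_coset_self[OF assms(1)] by blast
  with compactE_image[OF assms(3) open_add_left_image[OF assms(2)]]
  obtain F where F: "F \<subseteq> K" "finite F" "K \<subseteq> (\<Union>g\<in>F. (+) g ` H)" .
  have "(+) k ` H \<in> (\<lambda>g. (+) g ` H) ` F" if k: "k \<in> K" for k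
  proof -
    obtain g where "g \<in> F" "k \<in> (+) g ` H" using F(3) k by blast
    then show ?thesis using add_coset_eq[OF assms(1)] by (metis image_eqI)
  qed
  then have "(\<lambda>g. (+) g ` H) ` K \<subseteq> (\<lambda>g. (+) g ` H) ` F" by blast
  then show ?thesis using finite_imageI[OF F(2)] by (rule finite_subset)
qed

lemma add_subgroup_nhd_imp_open:
  fixes H :: "'a::topological_group_add set"
  assumes H: "add_subgroup H" and N: "open N" "0 \<in> N" "N \<subseteq> H"
  shows "open H"
proof -
  have "H = (\<Union>h\<in>H. (+) h ` N)"
  proof (intro equalityI subsetI)
    fix h assume "h \<in> H"
    then show "h \<in> (\<Union>h\<in>H. (+) h ` N)" using imageI[OF N(2), of "(+) h"] by auto
  next
    fix x assume "x \<in> (\<Union>h\<in>H. (+) h ` N)"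
    then obtain h n where "h \<in> H" "n \<in> N" "x = h + n" by blast
    then show "x \<in> H" using N(3) H unfolding add_subgroup_def by blast
  qed
  then show ?thesis using open_add_left_image[OF N(1)] by (metis open_UN)
qed

text \<open>The complement of an open subgroup is a union of its cosets.\<close>
lemma open_add_subgroup_imp_closed:
  fixes H :: "'a::topological_group_add set"
  assumes H: "add_subgroup H" "open H"
  shows "closed H"
proof -
  have "(+) g ` H \<subseteq> - H" if "g \<in> - H" for g
  proof
    fix x assume "x \<in> (+) g ` H"
    then obtain h where h: "h \<in> H" "x = g + h" by blast
    have "x \<notin> H"
    proof
      assume "x \<in> H"
      then have "x + - h \<in> H" using h(1) H(1) unfolding add_subgroup_def by blast
      with h(2) \<open>g \<in> - H\<close> show False by (simp add: add.assoc)
    qed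
    then show "x \<in> - H" by simp
  qed
  then have "(\<Union>g\<in>- H. (+) g ` H) \<subseteq> - H" by (rule UN_least)
  with add_coset_self[OF H(1)] have "- H = (\<Union>g\<in>- H. (+) g ` H)" by blast
  then show ?thesis using open_add_left_image[OF H(2)] by (metis open_UN closed_open)
qed

text \<open>The stabiliser of \<open>V\<close> under translation contains every symmetric \<open>N\<close> with \<open>V + N \<subseteq> V\<close>;
  being an open subgroup it is closed, hence compact inside \<open>V\<close>.\<close>
lemma compact_open_nhd_imp_compact_open_subgroup:
  fixes V :: "'a::topological_ab_group_add set"
  assumes cV: "compact V" and oV: "open V" and V0: "0 \<in> V"
  obtains H where "compact H" "open H" "add_subgroup H" "H \<subseteq> V"
proof -
  obtain N where oN: "open N" and N0: "0 \<in> N" and N_minus: "\<And>n. n \<in> N \<Longrightarrow> - n \<in> N"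
    and VN: "\<And>x n. x \<in> V \<Longrightarrow> n \<in> N \<Longrightarrow> x + n \<in> V"
    using compact_add_symmetric_nhd_subset_open[OF cV oV order_refl] by blast
  define H where "H = {x. (+) x ` V = V}"
  have sH: "add_subgroup H"
  proof (rule add_subgroupI)
    show "0 \<in> H" by (simp add: H_def)
    show "x + y \<in> H" if "x \<in> H" "y \<in> H" for x y
    proof -
      have "(+) (x + y) ` V = (+) x ` ((+) y ` V)" by (simp add: image_image add.assoc)
      then show ?thesis using that by (simp add: H_def)
    qed
    show "- x \<in> H" if "x \<in> H" for x
    proof -
      have "(+) (- x) ` V = (+) (- x) ` ((+) x ` V)" using that by (simp add: H_def)
      also have "\<dots> = V" by (auto simp: image_image add.assoc[symmetric])
      finally show ?thesis by (simp add: H_def)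
    qed
  qed
  have "H \<subseteq> V"
  proof
    fix x assume "x \<in> H"
    then have "x + 0 \<in> V" using V0 unfolding H_def by blast
    then show "x \<in> V" by simp
  qed
  have "N \<subseteq> H"
  proof
    fix n assume n: "n \<in> N"
    have "V \<subseteq> (+) n ` V"
    proof
      fix v assume "v \<in> V"
      then have "v + - n \<in> V" by (rule VN[OF _ N_minus[OF n]])
      then show "v \<in> (+) n ` V" by (rule image_eqI[rotated]) (simp add: add_diff_eq)
    qed
    moreover have "(+) n ` V \<subseteq> V" using VN[OF _ n] by (auto simp: add.commute)
    ultimately show "n \<in> H" by (simp add: H_def)
  qed
  then have "open H" by (rule add_subgroup_nhd_imp_open[OF sH oN N0])
  then have "closed H" by (rule open_add_subgroup_imp_closed[OF sH])
  with \<open>H \<subseteq> V\<close> have "compact H" using cV by (metis compact_Int_closed inf.absorb_iff2)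
  then show ?thesis using \<open>open H\<close> sH \<open>H \<subseteq> V\<close> by (rule that)
qed

lemma compact_open_add_subgroup_automorphism_image:
  fixes \<alpha> :: "'a::topological_ab_group_add \<Rightarrow> 'a"
  assumes "\<And>x y. \<alpha> (x + y) = \<alpha> x + \<alpha> y" and hom: "homeomorphism UNIV UNIV \<alpha> \<beta>"
    and "compact U" "open U" "add_subgroup U"
  shows "compact (\<alpha> ` U)" "open (\<alpha> ` U)" "add_subgroup (\<alpha> ` U)"
  using homeomorphism_UNIV_compact_image[OF hom] homeomorphism_UNIV_open_image[OF hom]
    add_subgroup_additive_image assms by auto

lemma compact_component_imp_compact_open_subgroup:
  assumes "locally_compact_space (euclidean :: 'a topology)"
    and "compact (connected_component_set UNIV (0::'a))"
  obtains H :: "'a::{topological_ab_group_add,t2_space} set" where "compact H" "open H" "add_subgroup H"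
  by (metis assms compact_component_imp_compact_open_nhd compact_open_nhd_imp_compact_open_subgroup)

context
  fixes \<mu> :: "'a::{topological_ab_group_add,t2_space} measure"
  assumes haar: "haar_measure \<mu>"
begin

lemma sets_haar: "sets \<mu> = sets borel"
  using haar unfolding haar_measure_def by (elim conjE) auto

lemma space_haar: "space \<mu> = UNIV"
  using sets_eq_imp_space_eq[OF sets_haar] by simp

lemma emeasure_haar_add_left: "A \<in> sets borel \<Longrightarrow> emeasure \<mu> ((+) g ` A) = emeasure \<mu> A"
  using haar unfolding haar_measure_def by (elim conjE) auto

lemma emeasure_haar_compact_finite: "compact K \<Longrightarrow> emeasure \<mu> K < \<infinity>"
  using haar unfolding haar_measure_def by (elim conjE) auto

lemma emeasure_haar_outer_regular:
  "A \<in> sets borel \<Longrightarrow> emeasure \<mu> A = (INF U\<in>{U. open U \<and> A \<subseteq> U}. emeasure \<mu> U)"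
  using haar unfolding haar_measure_def by (elim conjE) auto

lemma emeasure_haar_inner_regular:
  "open U \<Longrightarrow> emeasure \<mu> U = (SUP K\<in>{K. compact K \<and> K \<subseteq> U}. emeasure \<mu> K)"
  using haar unfolding haar_measure_def by (elim conjE) auto

lemma emeasure_haar_UNIV_nonzero: "emeasure \<mu> UNIV \<noteq> 0"
  using haar unfolding haar_measure_def space_haar by (elim conjE)

text \<open>Finitely many translates of an open subgroup cover any compact set, so by inner regularity
  a null open subgroup would make \<open>\<mu>\<close> vanish.\<close>
lemma emeasure_haar_open_subgroup_nonzero:
  assumes W: "add_subgroup W" "open W"
  shows "emeasure \<mu> W \<noteq> 0"
proof
  assume W0: "emeasure \<mu> W = 0"
  have "emeasure \<mu> K = 0" if "compact K" for K
  proof -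
    let ?C = "(\<lambda>g. (+) g ` W) ` K"
    have C_sets: "?C \<subseteq> sets \<mu>"
      using open_add_left_image[OF W(2)] by (auto simp: sets_haar)
    have "K \<subseteq> \<Union> ?C" using add_coset_self[OF W(1)] by blast
    then have "emeasure \<mu> K \<le> emeasure \<mu> (\<Union> ?C)"
      using C_sets finite_cosets_open_add_subgroup[OF W that] by (intro emeasure_mono) auto
    also have "\<dots> \<le> (\<Sum>C\<in>?C. emeasure \<mu> C)"
      using emeasure_subadditive_finite[of ?C id \<mu>] C_sets finite_cosets_open_add_subgroup[OF W that]
      by simp
    also have "\<dots> = 0"
      using W0 emeasure_haar_add_left[OF borel_open[OF W(2)]] by (intro sum.neutral) auto
    finally show ?thesis by simp
  qed
  then have "emeasure \<mu> UNIV = 0"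
    using emeasure_haar_inner_regular[OF open_UNIV] by (auto intro: antisym SUP_least)
  with emeasure_haar_UNIV_nonzero show False ..
qed

lemma emeasure_haar_eq_index_mult:
  assumes W: "add_subgroup W" "open W" and L: "add_subgroup L" "compact L" and "W \<subseteq> L"
  shows "emeasure \<mu> L = of_nat (card ((\<lambda>g. (+) g ` W) ` L)) * emeasure \<mu> W"
proof -
  let ?C = "(\<lambda>g. (+) g ` W) ` L"
  have "id ` ?C \<subseteq> sets \<mu>"
    using open_add_left_image[OF W(2)] by (auto simp: sets_haar)
  from sum_emeasure[OF this add_cosets_disjoint[OF W(1)] finite_cosets_open_add_subgroup[OF W L(2)]]
  have "emeasure \<mu> L = (\<Sum>C\<in>?C. emeasure \<mu> C)"
    using add_subgroup_Union_cosets[OF W(1) L(1) \<open>W \<subseteq> L\<close>] by simp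
  also have "\<dots> = (\<Sum>C\<in>?C. emeasure \<mu> W)"
    using emeasure_haar_add_left[OF borel_open[OF W(2)]] by (intro sum.cong) auto
  finally show ?thesis by simp
qed

lemma emeasure_haar_compact_open_subgroup:
  assumes "compact U" "open U" "add_subgroup U"
  shows "emeasure \<mu> U = ennreal (measure \<mu> U)" and "measure \<mu> U > 0"
proof -
  have "emeasure \<mu> U \<noteq> top" using emeasure_haar_compact_finite[OF assms(1)] by (simp add: less_top)
  then show eq: "emeasure \<mu> U = ennreal (measure \<mu> U)" by (rule emeasure_eq_ennreal_measure)
  show "measure \<mu> U > 0"
    using emeasure_haar_open_subgroup_nonzero[OF assms(3,2)] eq
    by (metis ennreal_0 measure_nonneg order_le_less)
qed

lemma measure_haar_compact_open_subgroups_ratio_rational: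
  assumes U: "compact U" "open U" "add_subgroup U"
    and U': "compact U'" "open U'" "add_subgroup U'"
  shows "measure \<mu> U' / measure \<mu> U \<in> \<rat>"
proof -
  define W where "W = U \<inter> U'"
  have W: "add_subgroup W" "open W"
    using U U' by (simp_all add: W_def add_subgroup_Int open_Int)
  have index: "measure \<mu> L = real (card ((\<lambda>g. (+) g ` W) ` L)) * measure \<mu> W"
    if "add_subgroup L" "compact L" "W \<subseteq> L" for L
    using emeasure_haar_eq_index_mult[OF W that]
    by (simp add: measure_def enn2real_mult enn2real_of_nat)
  have "measure \<mu> U = real (card ((\<lambda>g. (+) g ` W) ` U)) * measure \<mu> W"
    and "measure \<mu> U' = real (card ((\<lambda>g. (+) g ` W) ` U')) * measure \<mu> W"
    using index U U' by (auto simp: W_def)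
  then show ?thesis
    by (cases "measure \<mu> W = 0") (simp_all add: Rats_divide)
qed

end

lemma INF_mult_right_ennreal:
  fixes c :: ennreal
  assumes "c \<noteq> 0" "c \<noteq> \<infinity>"
  shows "(INF i\<in>I. f i) * c = (INF i\<in>I. f i * c)"
proof (rule antisym)
  show "(INF i\<in>I. f i) * c \<le> (INF i\<in>I. f i * c)"
    by (intro INF_greatest mult_right_mono INF_lower) auto
  have "(INF i\<in>I. f i * c) / c \<le> (INF i\<in>I. f i)"
  proof (rule INF_greatest)
    fix i assume "i \<in> I"
    then have "(INF i\<in>I. f i * c) / c \<le> (f i * c) / c" by (intro divide_right_mono_ennreal INF_lower)
    also have "\<dots> = f i" using assms by (simp add: mult_divide_eq_ennreal)
    finally show "(INF i\<in>I. f i * c) / c \<le> f i" .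
  qed
  then have "((INF i\<in>I. f i * c) / c) * c \<le> (INF i\<in>I. f i) * c" by (rule mult_right_mono) simp
  moreover have "((INF i\<in>I. f i * c) / c) * c = (INF i\<in>I. f i * c)"
    using assms by (simp add: ennreal_divide_times ennreal_times_divide mult_divide_eq_ennreal)
  ultimately show "(INF i\<in>I. f i * c) \<le> (INF i\<in>I. f i) * c" by simp
qed

lemma compact_finite_borel_partition_add_translates:
  fixes U :: "'a::topological_group_add set"
  assumes U: "compact U" "U \<in> sets borel" and N: "open N" "0 \<in> N"
  obtains P :: "nat \<Rightarrow> 'a set" and m :: nat and x :: "nat \<Rightarrow> 'a"
  where "\<And>i. P i \<in> sets borel" "disjoint_family_on P {..<m}" "(\<Union>i<m. P i) = U"
    "\<And>i. P i \<subseteq> (+) (x i) ` N"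
proof -
  have "U \<subseteq> (\<Union>u\<in>U. (+) u ` N)"
    using N(2) by (force intro: image_eqI[of _ _ 0])
  then obtain F where F: "F \<subseteq> U" "finite F" "U \<subseteq> (\<Union>u\<in>F. (+) u ` N)"
    using compactE_image[OF U(1), of U "\<lambda>u. (+) u ` N"] open_add_left_image[OF N(1)] by metis
  obtain m x where F_eq: "F = x ` {i. i < (m::nat)}"
    using finite_imp_nat_seg_image_inj_on[OF F(2)] by blast
  define A where "A i = (if i < m then U \<inter> (+) (x i) ` N else {})" for i
  have "range A \<subseteq> sets borel"
    using open_add_left_image[OF N(1)] U(2) by (auto simp: A_def)
  then have "disjointed A i \<in> sets borel" for i
    using sets.range_disjointed_sets by blast
  moreover have "disjoint_family_on (disjointed A) {..<m}"
    by (rule disjoint_family_on_mono[OF subset_UNIV disjoint_family_disjointed])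
  moreover have "(\<Union>i<m. A i) = U"
  proof
    show "(\<Union>i<m. A i) \<subseteq> U" by (auto simp: A_def)
    show "U \<subseteq> (\<Union>i<m. A i)"
    proof
      fix u assume "u \<in> U"
      then obtain i where "i < m" "u \<in> (+) (x i) ` N" using F(3) unfolding F_eq by blast
      then show "u \<in> (\<Union>i<m. A i)" using \<open>u \<in> U\<close> by (auto simp: A_def)
    qed
  qed
  then have "(\<Union>i<m. disjointed A i) = U"
    using finite_UN_disjointed_eq[of A m] by (simp add: atLeast0LessThan)
  moreover have "disjointed A i \<subseteq> (+) (x i) ` N" for i
    using disjointed_subset[of A i] by (auto simp: A_def split: if_splits)
  ultimately show ?thesis by (rule that)
qed

text \<open>A Fubini-free form of the usual uniqueness argument: partition \<open>U\<close> into pieces \<open>P\<^sub>i\<close>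
  lying in translates \<open>x\<^sub>i + N\<close> with \<open>K + N \<subseteq> V\<close>. For \<open>y \<in> U\<close> the pieces meeting \<open>K - y\<close> all
  satisfy \<open>y \<in> V - x\<^sub>i\<close>, so \<open>\<mu> K \<le> \<Sum>\<^sub>i \<mu> P\<^sub>i \<cdot> 1\<^bsub>V - x\<^sub>i\<^esub>(y)\<close>; integrating over \<open>U\<close> with
  respect to \<open>\<nu>\<close> gives the claim.\<close>
lemma haar_compact_le_open_cover:
  fixes \<mu> \<nu> :: "'a::{topological_ab_group_add,t2_space} measure"
  assumes haar: "haar_measure \<mu>" "haar_measure \<nu>"
    and U: "compact U" "open U" "add_subgroup U"
    and K: "compact K" "K \<subseteq> U" and V: "open V" "K \<subseteq> V"
  shows "emeasure \<mu> K * emeasure \<nu> U \<le> emeasure \<mu> U * emeasure \<nu> V"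
proof -
  obtain N where N: "open N" "0 \<in> N" "\<And>n. n \<in> N \<Longrightarrow> - n \<in> N"
    and KN_V: "\<And>k n. k \<in> K \<Longrightarrow> n \<in> N \<Longrightarrow> k + n \<in> V"
    using compact_add_symmetric_nhd_subset_open[OF K(1) V] by blast
  obtain P m x where P_sets: "\<And>i. P i \<in> sets borel"
    and P_disj: "disjoint_family_on P {..<m::nat}" and P_U: "(\<Union>i<m. P i) = U"
    and P_N: "\<And>i. P i \<subseteq> (+) (x i) ` N"
    using compact_finite_borel_partition_add_translates[OF U(1) borel_open[OF U(2)] N(1,2)] by blast
  define T where "T i = (+) (- x i) ` V" for i
  have T_sets: "T i \<in> sets borel" for i
    unfolding T_def by (intro borel_open open_add_left_image V(1))
  have cover: "(+) (- y) ` K \<subseteq> (\<Union>i\<in>{i\<in>{..<m}. y \<in> T i}. P i)" if "y \<in> U" for y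
  proof
    fix z assume "z \<in> (+) (- y) ` K"
    then obtain k where k: "k \<in> K" "z = - y + k" by auto
    then have "z \<in> U" using U(3) K(2) \<open>y \<in> U\<close> unfolding add_subgroup_def by blast
    then obtain i where i: "i < m" "z \<in> P i" using P_U by blast
    then obtain n where n: "n \<in> N" "z = x i + n" using P_N by blast
    have "x i + y = k + - n" using k(2) n(2) by (simp add: algebra_simps)
    then have "x i + y \<in> V" using KN_V[OF k(1) N(3)[OF n(1)]] by simp
    then have "y \<in> T i" unfolding T_def by (force intro: image_eqI[of _ _ "x i + y"])
    then show "z \<in> (\<Union>i\<in>{i\<in>{..<m}. y \<in> T i}. P i)" using i by blast
  qed
  have pointwise: "emeasure \<mu> K * indicator U y \<le> (\<Sum>i<m. emeasure \<mu> (P i) * indicator (T i) y)"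
    for y
  proof (cases "y \<in> U")
    case True
    have "emeasure \<mu> K = emeasure \<mu> ((+) (- y) ` K)"
      by (rule emeasure_haar_add_left[OF haar(1) borel_closed[OF compact_imp_closed[OF K(1)]], symmetric])
    also have "\<dots> \<le> emeasure \<mu> (\<Union>i\<in>{i\<in>{..<m}. y \<in> T i}. P i)"
      using cover[OF True] P_sets by (intro emeasure_mono) (auto simp: sets_haar[OF haar(1)])
    also have "\<dots> \<le> (\<Sum>i\<in>{i\<in>{..<m}. y \<in> T i}. emeasure \<mu> (P i))"
      using P_sets by (intro emeasure_subadditive_finite) (auto simp: sets_haar[OF haar(1)])
    also have "\<dots> = (\<Sum>i<m. emeasure \<mu> (P i) * indicator (T i) y)"
      by (simp add: sum.inter_filter indicator_def Int_def lessThan_def conj_commute)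
    finally show ?thesis using True by simp
  qed simp
  have T_measurable: "T i \<in> sets \<nu>" for i
    using T_sets sets_haar[OF haar(2)] by simp
  have "emeasure \<mu> K * emeasure \<nu> U = (\<integral>\<^sup>+ y. emeasure \<mu> K * indicator U y \<partial>\<nu>)"
    using U(2) sets_haar[OF haar(2)] by (simp add: nn_integral_cmult_indicator)
  also have "\<dots> \<le> (\<integral>\<^sup>+ y. (\<Sum>i<m. emeasure \<mu> (P i) * indicator (T i) y) \<partial>\<nu>)"
    by (intro nn_integral_mono pointwise)
  also have "\<dots> = (\<Sum>i<m. \<integral>\<^sup>+ y. emeasure \<mu> (P i) * indicator (T i) y \<partial>\<nu>)"
    by (intro nn_integral_sum borel_measurable_times_ennreal borel_measurable_const
        borel_measurable_indicator T_measurable)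
  also have "\<dots> = (\<Sum>i<m. emeasure \<mu> (P i) * emeasure \<nu> (T i))"
    using T_measurable by (simp add: nn_integral_cmult_indicator)
  also have "\<dots> = (\<Sum>i<m. emeasure \<mu> (P i)) * emeasure \<nu> V"
    unfolding sum_distrib_right T_def
    by (simp only: emeasure_haar_add_left[OF haar(2) borel_open[OF V(1)]])
  also have "(\<Sum>i<m. emeasure \<mu> (P i)) = emeasure \<mu> U"
    using sum_emeasure[of P "{..<m}" \<mu>] P_sets P_disj P_U by (auto simp: sets_haar[OF haar(1)])
  finally show ?thesis .
qed

lemma haar_proportional_compact_subset:
  fixes \<mu> \<nu> :: "'a::{topological_ab_group_add,t2_space} measure"
  assumes haar: "haar_measure \<mu>" "haar_measure \<nu>"
    and U: "compact U" "open U" "add_subgroup U" and K: "compact K" "K \<subseteq> U"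
  shows "emeasure \<mu> K * emeasure \<nu> U = emeasure \<nu> K * emeasure \<mu> U"
proof -
  have le: "emeasure \<mu> K * emeasure \<nu> U \<le> emeasure \<nu> K * emeasure \<mu> U"
    if haar: "haar_measure \<mu>" "haar_measure \<nu>" for \<mu> \<nu> :: "'a measure"
  proof -
    have "emeasure \<mu> U \<noteq> 0" "emeasure \<mu> U \<noteq> \<infinity>"
      using emeasure_haar_open_subgroup_nonzero[OF haar(1) U(3,2)]
        emeasure_haar_compact_finite[OF haar(1) U(1)] by auto
    then have "emeasure \<nu> K * emeasure \<mu> U =
        (INF V\<in>{V. open V \<and> K \<subseteq> V}. emeasure \<nu> V * emeasure \<mu> U)"
      using emeasure_haar_outer_regular[OF haar(2) borel_closed[OF compact_imp_closed[OF K(1)]]]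
      by (simp add: INF_mult_right_ennreal)
    moreover have "emeasure \<mu> K * emeasure \<nu> U \<le> emeasure \<nu> V * emeasure \<mu> U"
      if "open V" "K \<subseteq> V" for V
      using haar_compact_le_open_cover[OF haar U K that] by (simp add: mult.commute)
    ultimately show ?thesis by (auto intro: INF_greatest)
  qed
  show ?thesis using le[OF haar] le[OF haar(2,1)] by (rule antisym)
qed

lemma haar_proportional_compact:
  fixes \<mu> \<nu> :: "'a::{topological_ab_group_add,t2_space} measure"
  assumes haar: "haar_measure \<mu>" "haar_measure \<nu>"
    and U: "compact U" "open U" "add_subgroup U" and K: "compact K"
  shows "emeasure \<mu> K * emeasure \<nu> U = emeasure \<nu> K * emeasure \<mu> U"
proof -
  let ?C = "(\<lambda>g. (+) g ` U) ` K"
  have piece_compact: "compact (K \<inter> C)" if "C \<in> ?C" for C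
    using that compact_add_left_image[OF U(1)] K by (auto intro: compact_Int)
  have sum_pieces: "emeasure M K = (\<Sum>C\<in>?C. emeasure M (K \<inter> C))"
    if "haar_measure M" for M :: "'a measure"
  proof -
    have "(\<lambda>C. K \<inter> C) ` ?C \<subseteq> sets M"
      using piece_compact by (auto simp: sets_haar[OF that] intro: borel_closed compact_imp_closed)
    moreover have "disjoint_family_on (\<lambda>C. K \<inter> C) ?C"
      using add_cosets_disjoint[OF U(3), of K] by (auto simp: disjoint_family_on_def)
    moreover have "(\<Union>C\<in>?C. K \<inter> C) = K" using add_coset_self[OF U(3)] by blast
    ultimately show ?thesis
      using sum_emeasure[of "\<lambda>C. K \<inter> C" ?C M] finite_cosets_open_add_subgroup[OF U(3,2) K] by simp
  qed
  have "emeasure \<mu> (K \<inter> C) * emeasure \<nu> U = emeasure \<nu> (K \<inter> C) * emeasure \<mu> U"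
    if C: "C \<in> ?C" for C
  proof -
    obtain g where g: "C = (+) g ` U" using C by blast
    define K' where "K' = (+) (- g) ` (K \<inter> C)"
    have "compact K'"
      unfolding K'_def by (rule compact_add_left_image[OF piece_compact[OF C]])
    moreover have "K' \<subseteq> U" by (auto simp: K'_def g)
    moreover have "emeasure M K' = emeasure M (K \<inter> C)" if "haar_measure M" for M :: "'a measure"
      unfolding K'_def
      by (rule emeasure_haar_add_left[OF that borel_closed[OF compact_imp_closed[OF piece_compact[OF C]]]])
    ultimately show ?thesis using haar_proportional_compact_subset[OF haar U] haar by metis
  qed
  then show ?thesis
    using sum_pieces[OF haar(1)] sum_pieces[OF haar(2)] by (simp add: sum_distrib_right)
qed

lemma haar_proportional_open:
  fixes \<mu> \<nu> :: "'a::{topological_ab_group_add,t2_space} measure"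
  assumes haar: "haar_measure \<mu>" "haar_measure \<nu>"
    and U: "compact U" "open U" "add_subgroup U" and W: "open W"
  shows "emeasure \<mu> W * emeasure \<nu> U = emeasure \<nu> W * emeasure \<mu> U"
proof -
  have "emeasure \<mu> W * emeasure \<nu> U = (SUP K\<in>{K. compact K \<and> K \<subseteq> W}. emeasure \<mu> K * emeasure \<nu> U)"
    using emeasure_haar_inner_regular[OF haar(1) W] by (simp add: SUP_mult_right_ennreal)
  also have "\<dots> = (SUP K\<in>{K. compact K \<and> K \<subseteq> W}. emeasure \<nu> K * emeasure \<mu> U)"
    using haar_proportional_compact[OF haar U] by (intro SUP_cong) auto
  also have "\<dots> = emeasure \<nu> W * emeasure \<mu> U"
    using emeasure_haar_inner_regular[OF haar(2) W] by (simp add: SUP_mult_right_ennreal)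
  finally show ?thesis .
qed

lemma haar_proportional:
  fixes \<mu> \<nu> :: "'a::{topological_ab_group_add,t2_space} measure"
  assumes haar: "haar_measure \<mu>" "haar_measure \<nu>"
    and U: "compact U" "open U" "add_subgroup U" and A: "A \<in> sets borel"
  shows "emeasure \<mu> A * emeasure \<nu> U = emeasure \<nu> A * emeasure \<mu> U"
proof -
  have fin: "emeasure M U \<noteq> 0" "emeasure M U \<noteq> \<infinity>" if "haar_measure M" for M :: "'a measure"
    using emeasure_haar_open_subgroup_nonzero[OF that U(3,2)]
      emeasure_haar_compact_finite[OF that U(1)] by auto
  have "emeasure \<mu> A * emeasure \<nu> U = (INF V\<in>{V. open V \<and> A \<subseteq> V}. emeasure \<mu> V * emeasure \<nu> U)"
    using emeasure_haar_outer_regular[OF haar(1) A] fin[OF haar(2)] by (simp add: INF_mult_right_ennreal)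
  also have "\<dots> = (INF V\<in>{V. open V \<and> A \<subseteq> V}. emeasure \<nu> V * emeasure \<mu> U)"
    using haar_proportional_open[OF haar U] by (intro INF_cong) auto
  also have "\<dots> = emeasure \<nu> A * emeasure \<mu> U"
    using emeasure_haar_outer_regular[OF haar(2) A] fin[OF haar(1)] by (simp add: INF_mult_right_ennreal)
  finally show ?thesis .
qed

lemma homeomorphism_UNIV_open_supersets_image:
  assumes hom: "homeomorphism UNIV UNIV f g"
  shows "{V. open V \<and> f ` A \<subseteq> V} = (`) f ` {W. open W \<and> A \<subseteq> W}"
proof (intro equalityI subsetI)
  fix V assume "V \<in> {V. open V \<and> f ` A \<subseteq> V}"
  then have "open (g ` V)" "A \<subseteq> g ` V"
    using homeomorphism_UNIV_open_image[OF homeomorphism_symD[OF hom]]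
      homeomorphism_UNIV_image_eq_vimage[OF homeomorphism_symD[OF hom]] by auto
  moreover have "V = f ` (g ` V)"
    using homeomorphism_apply2[OF hom] by (simp add: image_image)
  ultimately show "V \<in> (`) f ` {W. open W \<and> A \<subseteq> W}" by blast
qed (use homeomorphism_UNIV_open_image[OF hom] in auto)

lemma homeomorphism_UNIV_compact_subsets_image:
  assumes hom: "homeomorphism UNIV UNIV f g"
  shows "{K. compact K \<and> K \<subseteq> f ` U} = (`) f ` {K. compact K \<and> K \<subseteq> U}"
proof (intro equalityI subsetI)
  fix K assume "K \<in> {K. compact K \<and> K \<subseteq> f ` U}"
  then have "compact (g ` K)" "g ` K \<subseteq> U"
    using homeomorphism_UNIV_compact_image[OF homeomorphism_symD[OF hom]]
      homeomorphism_UNIV_image_eq_vimage[OF hom] by auto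
  moreover have "K = f ` (g ` K)"
    using homeomorphism_apply2[OF hom] by (simp add: image_image)
  ultimately show "K \<in> (`) f ` {K. compact K \<and> K \<subseteq> U}" by blast
qed (use homeomorphism_UNIV_compact_image[OF hom] in auto)

lemma emeasure_distr_homeomorphism_inverse:
  assumes hom: "homeomorphism UNIV UNIV f g" and M: "sets M = sets borel" and A: "A \<in> sets borel"
  shows "emeasure (distr M borel g) A = emeasure M (f ` A)"
proof -
  have "g \<in> borel_measurable borel"
    using hom unfolding homeomorphism_def by (intro borel_measurable_continuous_onI) auto
  then have "g \<in> measurable M borel" using measurable_cong_sets[OF M refl] by blast
  moreover have "g -` A \<inter> space M = f ` A"
    using hom sets_eq_imp_space_eq[OF M] unfolding homeomorphism_def by force
  ultimately show ?thesis using emeasure_distr A by metis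
qed

lemma haar_measure_distr_automorphism:
  fixes \<mu> :: "'a::{topological_ab_group_add,t2_space} measure" and \<alpha> \<beta> :: "'a \<Rightarrow> 'a"
  assumes haar: "haar_measure \<mu>" and additive: "\<And>x y. \<alpha> (x + y) = \<alpha> x + \<alpha> y"
    and hom: "homeomorphism UNIV UNIV \<alpha> \<beta>"
  shows "haar_measure (distr \<mu> borel \<beta>)"
  unfolding haar_measure_def
proof (intro conjI allI ballI impI)
  let ?\<nu> = "distr \<mu> borel \<beta>"
  have \<nu>: "emeasure ?\<nu> A = emeasure \<mu> (\<alpha> ` A)" if "A \<in> sets borel" for A
    by (rule emeasure_distr_homeomorphism_inverse[OF hom sets_haar[OF haar] that])
  show "sets ?\<nu> = sets borel" by simp
  have "\<alpha> ` UNIV = UNIV" using hom unfolding homeomorphism_def by auto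
  then show "emeasure ?\<nu> (space ?\<nu>) \<noteq> 0"
    using \<nu>[of UNIV] emeasure_haar_UNIV_nonzero[OF haar] by simp
  fix g :: 'a and A :: "'a set" assume A: "A \<in> sets borel"
  have "\<alpha> ` ((+) g ` A) = (+) (\<alpha> g) ` (\<alpha> ` A)" by (auto simp: image_image additive)
  then show "emeasure ?\<nu> ((+) g ` A) = emeasure ?\<nu> A"
    using \<nu> A borel_add_left_image
      emeasure_haar_add_left[OF haar homeomorphism_UNIV_borel_image[OF hom A]] by metis
next
  fix K :: "'a set" assume "compact K"
  then show "emeasure (distr \<mu> borel \<beta>) K < \<infinity>"
    using emeasure_distr_homeomorphism_inverse[OF hom sets_haar[OF haar]]
      emeasure_haar_compact_finite[OF haar homeomorphism_UNIV_compact_image[OF hom]]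
    by (simp add: borel_closed compact_imp_closed)
next
  fix A :: "'a set" assume A: "A \<in> sets borel"
  have "emeasure (distr \<mu> borel \<beta>) A = (INF W\<in>{W. open W \<and> A \<subseteq> W}. emeasure \<mu> (\<alpha> ` W))"
    using emeasure_distr_homeomorphism_inverse[OF hom sets_haar[OF haar] A]
      emeasure_haar_outer_regular[OF haar homeomorphism_UNIV_borel_image[OF hom A]]
    by (simp add: homeomorphism_UNIV_open_supersets_image[OF hom] image_comp)
  also have "\<dots> = (INF W\<in>{W. open W \<and> A \<subseteq> W}. emeasure (distr \<mu> borel \<beta>) W)"
    using emeasure_distr_homeomorphism_inverse[OF hom sets_haar[OF haar]] by (intro INF_cong) auto
  finally show "emeasure (distr \<mu> borel \<beta>) A =
      (INF W\<in>{W. open W \<and> A \<subseteq> W}. emeasure (distr \<mu> borel \<beta>) W)" .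
next
  fix U :: "'a set" assume U: "open U"
  have "emeasure (distr \<mu> borel \<beta>) U = (SUP K\<in>{K. compact K \<and> K \<subseteq> U}. emeasure \<mu> (\<alpha> ` K))"
    using emeasure_distr_homeomorphism_inverse[OF hom sets_haar[OF haar] borel_open[OF U]]
      emeasure_haar_inner_regular[OF haar homeomorphism_UNIV_open_image[OF hom U]]
    by (simp add: homeomorphism_UNIV_compact_subsets_image[OF hom] image_comp)
  also have "\<dots> = (SUP K\<in>{K. compact K \<and> K \<subseteq> U}. emeasure (distr \<mu> borel \<beta>) K)"
    using emeasure_distr_homeomorphism_inverse[OF hom sets_haar[OF haar]]
    by (intro SUP_cong) (auto simp: borel_closed compact_imp_closed)
  finally show "emeasure (distr \<mu> borel \<beta>) U =
      (SUP K\<in>{K. compact K \<and> K \<subseteq> U}. emeasure (distr \<mu> borel \<beta>) K)" .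
qed

lemma braconnier_mod_eqI:
  fixes \<mu> :: "'a::{topological_ab_group_add,t2_space} measure" and \<alpha> :: "'a \<Rightarrow> 'a"
  assumes "c > 0"
    and scaling: "\<And>S. S \<in> sets borel \<Longrightarrow> emeasure \<mu> (\<alpha> ` S) = ennreal c * emeasure \<mu> S"
    and A: "A \<in> sets borel" "emeasure \<mu> A = ennreal a" "a > 0"
  shows "braconnier_mod \<mu> \<alpha> = c"
  unfolding braconnier_mod_def
proof (rule the_equality)
  show "c > 0 \<and> (\<forall>S\<in>sets borel. emeasure \<mu> (\<alpha> ` S) = ennreal c * emeasure \<mu> S)"
    using assms by blast
  fix c' assume c': "c' > 0 \<and> (\<forall>S\<in>sets borel. emeasure \<mu> (\<alpha> ` S) = ennreal c' * emeasure \<mu> S)"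
  then have "ennreal c' * ennreal a = ennreal c * ennreal a"
    using scaling[OF A(1)] A by simp
  then have "ennreal (c' * a) = ennreal (c * a)"
    using c' \<open>c > 0\<close> A(3) by (simp add: ennreal_mult)
  then show "c' = c" using c' \<open>c > 0\<close> A(3) by simp
qed

lemma emeasure_haar_automorphism_image:
  fixes \<mu> :: "'a::{topological_ab_group_add,t2_space} measure" and \<alpha> \<beta> :: "'a \<Rightarrow> 'a"
  assumes haar: "haar_measure \<mu>" and additive: "\<And>x y. \<alpha> (x + y) = \<alpha> x + \<alpha> y"
    and hom: "homeomorphism UNIV UNIV \<alpha> \<beta>"
    and U: "compact U" "open U" "add_subgroup U" and S: "S \<in> sets borel"
  shows "emeasure \<mu> (\<alpha> ` S) = ennreal (measure \<mu> (\<alpha> ` U) / measure \<mu> U) * emeasure \<mu> S"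
proof -
  note \<alpha>U = compact_open_add_subgroup_automorphism_image[OF additive hom U]
  let ?a = "measure \<mu> U" and ?b = "measure \<mu> (\<alpha> ` U)"
  have "emeasure \<mu> S * ennreal ?b = emeasure \<mu> (\<alpha> ` S) * ennreal ?a"
    using haar_proportional[OF haar haar_measure_distr_automorphism[OF haar additive hom] U S]
      emeasure_distr_homeomorphism_inverse[OF hom sets_haar[OF haar]] S borel_open[OF U(2)]
      emeasure_haar_compact_open_subgroup(1)[OF haar U]
      emeasure_haar_compact_open_subgroup(1)[OF haar \<alpha>U]
    by simp
  then have "emeasure \<mu> (\<alpha> ` S) = emeasure \<mu> S * ennreal ?b / ennreal ?a"
    using emeasure_haar_compact_open_subgroup(2)[OF haar U] by (simp add: mult_divide_eq_ennreal)
  also have "\<dots> = emeasure \<mu> S * (ennreal ?b / ennreal ?a)"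
    by (simp add: ennreal_times_divide)
  also have "\<dots> = ennreal (?b / ?a) * emeasure \<mu> S"
    using emeasure_haar_compact_open_subgroup(2)[OF haar U] by (simp add: divide_ennreal mult.commute)
  finally show ?thesis .
qed

theorem proposition2p8:
  fixes \<mu> :: "'a::{topological_ab_group_add,t2_space} measure"
    and \<alpha> :: "'a \<Rightarrow> 'a"
  assumes "locally_compact_space (euclidean :: 'a topology)"
    and "compact (connected_component_set UNIV (0::'a))"
    and "haar_measure \<mu>"
    and "top_group_aut \<alpha>"
  shows "braconnier_mod \<mu> \<alpha> \<in> \<rat>"
proof -
  obtain \<beta> where additive: "\<And>x y. \<alpha> (x + y) = \<alpha> x + \<alpha> y"
    and hom: "homeomorphism UNIV UNIV \<alpha> \<beta>"
    using assms(4) unfolding top_group_aut_def by blast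
  obtain U :: "'a set" where U: "compact U" "open U" "add_subgroup U"
    using compact_component_imp_compact_open_subgroup[OF assms(1,2)] by blast
  note \<alpha>U = compact_open_add_subgroup_automorphism_image[OF additive hom U]
  have "braconnier_mod \<mu> \<alpha> = measure \<mu> (\<alpha> ` U) / measure \<mu> U"
  proof (rule braconnier_mod_eqI)
    show "measure \<mu> (\<alpha> ` U) / measure \<mu> U > 0"
      using emeasure_haar_compact_open_subgroup(2)[OF assms(3)] U \<alpha>U by simp
    show "emeasure \<mu> (\<alpha> ` S) = ennreal (measure \<mu> (\<alpha> ` U) / measure \<mu> U) * emeasure \<mu> S"
      if "S \<in> sets borel" for S
      by (rule emeasure_haar_automorphism_image[OF assms(3) additive hom U that])
    show "U \<in> sets borel" using U(2) by simp
  qed (use emeasure_haar_compact_open_subgroup[OF assms(3) U] in auto)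
  also have "\<dots> \<in> \<rat>"
    by (rule measure_haar_compact_open_subgroups_ratio_rational[OF assms(3) U \<alpha>U])
  finally show ?thesis .
qed

end
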